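(* Let $L$ be a finite simplicial complex and $L^\circ=L\cup\{\varnothing\}$. For $x\in L^\circ$ put $\mu_L(x)=1-\chi(\operatorname{lk}_Lx)$, with the convention $\operatorname{lk}_L\varnothing=L$. Then for all $y,z\in L^\circ$, $$\sum_{x\in L^\circ,\ x\cap y=z}\mu_L(x)=\begin{cases}1&\text{if } y=z,\\0&\text{otherwise.}\end{cases}$$
   Context: $\chi$ is the Euler characteristic and $\operatorname{lk}_Lx$ the link of the simplex $x$ in $L$ (the empty complex has $\chi=0$). The intersection of two simplices of $L$ is a common face or empty, hence an element of $L^\circ$. *)

theory Defs
  imports Main
begin

definition simplicial_complex :: "'a set set \<Rightarrow> bool" where
  "simplicial_complex L \<longleftrightarrow>
     (\<forall>s\<in>L. finite s \<and> s \<noteq> {}) \<and>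
     (\<forall>s\<in>L. \<forall>t. t \<subseteq> s \<and> t \<noteq> {} \<longrightarrow> t \<in> L)"

definition finite_simplicial_complex :: "'a set set \<Rightarrow> bool" where
  "finite_simplicial_complex L \<longleftrightarrow> simplicial_complex L \<and> finite L"

definition euler_char :: "'a set set \<Rightarrow> int" where
  "euler_char K = (\<Sum>s\<in>K. (-1) ^ (card s - 1))"

text \<open>Link of a simplex x in L; for x = {} this is L itself.\<close>
definition link :: "'a set set \<Rightarrow> 'a set \<Rightarrow> 'a set set" where
  "link L x = {s \<in> L. s \<inter> x = {} \<and> s \<union> x \<in> L}"

definition mu :: "'a set set \<Rightarrow> 'a set \<Rightarrow> int" where
  "mu L x = 1 - euler_char (link L x)"

end

theory Submission
  imports Defs
begin

text \<open>Expanding the link along the bijection \<open>s \<mapsto> s \<union> x\<close> gives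
  \<open>\<mu>\<^sub>L(x) = \<Sum>\<^bsub>w \<supseteq> x\<^esub> (-1)\<^bsup>|w|+|x|\<^esup>\<close>, the sum over \<open>L\<degree>\<close>.
  After exchanging the summations, the faces \<open>x \<subseteq> w\<close> with \<open>x \<inter> y = z\<close> form the Boolean
  interval \<open>[z, z \<union> (w - y)]\<close>, whose alternating sum vanishes unless \<open>w \<subseteq> y\<close>; what is
  left is the alternating sum over the interval \<open>[z, y]\<close>, which is \<open>[y = z]\<close>.\<close>

lemma sum_neg_one_power_card_interval:
  assumes "finite S" "U \<subseteq> S"
  shows "(\<Sum>T | U \<subseteq> T \<and> T \<subseteq> S. (-1) ^ card T)
    = (if U = S then (-1) ^ card S else (0::'b::ring_1))"
proof (cases "U = S")
  case True
  then have "{T. U \<subseteq> T \<and> T \<subseteq> S} = {S}" by auto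
  with True show ?thesis by simp
next
  case False
  have "finite {T. U \<subseteq> T \<and> T \<subseteq> S}"
    by (rule finite_subset[of _ "Pow S"]) (use assms in auto)
  moreover have "card {T \<in> {T. U \<subseteq> T \<and> T \<subseteq> S}. even (card T)}
      = card {T \<in> {T. U \<subseteq> T \<and> T \<subseteq> S}. odd (card T)}"
    using card_subsupersets_even_odd[of S U] assms False
    by (simp add: psubset_eq conj_commute conj_left_commute)
  ultimately show ?thesis
    using False by (simp add: sum_alternating_cancels)
qed

lemma one_minus_euler_char:
  assumes "finite K" "\<forall>s\<in>K. finite s \<and> s \<noteq> {}"
  shows "1 - euler_char K = (\<Sum>s\<in>insert {} K. (-1) ^ card s)"
proof -
  have "euler_char K = (\<Sum>s\<in>K. - ((-1) ^ card s))"
    unfolding euler_char_def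
  proof (rule sum.cong)
    fix s assume "s \<in> K"
    then have "card s = Suc (card s - 1)"
      using assms(2) by (simp add: card_gt_0_iff)
    then show "(-1) ^ (card s - 1) = - ((-1::int) ^ card s)"
      by (metis mult_minus1 power_Suc minus_minus)
  qed simp
  then show ?thesis using assms by (auto simp: sum_negf)
qed

lemma sum_alternating_cofaces_meet:
  fixes A :: "'a set set"
  assumes "finite A" and down_closed: "\<forall>w\<in>A. finite w \<and> Pow w \<subseteq> A" and "y \<in> A"
  shows "(\<Sum>x | x \<in> A \<and> x \<inter> y = z. \<Sum>w | w \<in> A \<and> x \<subseteq> w. (-1::int) ^ (card w + card x))
    = (if y = z then 1 else 0)"
proof (cases "z \<subseteq> y")
  case False
  then have no_terms: "{x. x \<in> A \<and> x \<inter> y = z} = {}" and "y \<noteq> z" by blast+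
  then show ?thesis unfolding no_terms by simp
next
  case True
  have fy: "finite y" using assms by blast
  have inner: "(\<Sum>x | x \<in> A \<and> x \<inter> y = z \<and> x \<subseteq> w. (-1::int) ^ card x)
      = (if z \<subseteq> w \<and> w \<subseteq> y then (-1) ^ card z else 0)" if "w \<in> A" for w
  proof (cases "z \<subseteq> w")
    case False
    then have no_terms: "{x. x \<in> A \<and> x \<inter> y = z \<and> x \<subseteq> w} = {}" by blast
    show ?thesis unfolding no_terms using False by simp
  next
    case zw: True
    have terms: "{x. x \<in> A \<and> x \<inter> y = z \<and> x \<subseteq> w} = {x. z \<subseteq> x \<and> x \<subseteq> z \<union> (w - y)}"
      using that zw True down_closed by blast
    have "finite (z \<union> (w - y))"
      using that zw down_closed by (meson Diff_subset Un_least finite_subset)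
    then have "(\<Sum>x | z \<subseteq> x \<and> x \<subseteq> z \<union> (w - y). (-1::int) ^ card x)
        = (if z = z \<union> (w - y) then (-1) ^ card (z \<union> (w - y)) else 0)"
      by (rule sum_neg_one_power_card_interval) blast
    moreover have "z = z \<union> (w - y) \<longleftrightarrow> w \<subseteq> y"
      using True by blast
    ultimately show ?thesis
      unfolding terms using zw by (simp; metis)
  qed
  have "(\<Sum>x | x \<in> A \<and> x \<inter> y = z. \<Sum>w | w \<in> A \<and> x \<subseteq> w. (-1::int) ^ (card w + card x))
      = (\<Sum>w\<in>A. (-1) ^ card w * (\<Sum>x | x \<in> A \<and> x \<inter> y = z \<and> x \<subseteq> w. (-1) ^ card x))"
    by (subst sum.swap_restrict) (simp_all add: assms(1) power_add sum_distrib_left)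
  also have "\<dots> = (\<Sum>w\<in>A. if z \<subseteq> w \<and> w \<subseteq> y then (-1) ^ card w * (-1) ^ card z else 0)"
    by (rule sum.cong) (simp_all add: inner)
  also have "\<dots> = (\<Sum>w | z \<subseteq> w \<and> w \<subseteq> y. (-1) ^ card w) * (-1) ^ card z"
  proof -
    have "{w \<in> A. z \<subseteq> w \<and> w \<subseteq> y} = {w. z \<subseteq> w \<and> w \<subseteq> y}"
      using \<open>y \<in> A\<close> down_closed by blast
    then show ?thesis
      by (simp add: sum.inter_filter[OF assms(1), symmetric] sum_distrib_right)
  qed
  also have "\<dots> = (if y = z then 1 else 0)"
    unfolding sum_neg_one_power_card_interval[OF fy True] by (auto simp flip: power_add)
  finally show ?thesis .
qed

lemma mu_eq_sum_cofaces:
  assumes "finite_simplicial_complex L" "x \<in> insert {} L"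
  shows "mu L x = (\<Sum>w | w \<in> insert {} L \<and> x \<subseteq> w. (-1) ^ (card w + card x))"
proof -
  have simplices: "\<forall>s\<in>L. finite s \<and> s \<noteq> {}"
    and closed: "\<forall>s\<in>L. \<forall>t. t \<subseteq> s \<and> t \<noteq> {} \<longrightarrow> t \<in> L" and "finite L"
    using assms(1) unfolding finite_simplicial_complex_def simplicial_complex_def by blast+
  have "finite x" using assms(2) simplices by blast
  have "mu L x = (\<Sum>s\<in>insert {} (link L x). (-1) ^ card s)"
    unfolding mu_def
    by (rule one_minus_euler_char) (use \<open>finite L\<close> simplices in \<open>auto simp: link_def\<close>)
  also have "\<dots> = (\<Sum>w | w \<in> insert {} L \<and> x \<subseteq> w. (-1) ^ (card w + card x))"
  proof (rule sum.reindex_bij_witness[where j="\<lambda>s. s \<union> x" and i="\<lambda>w. w - x"])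
    fix w assume w: "w \<in> {w. w \<in> insert {} L \<and> x \<subseteq> w}"
    then show "w - x \<union> x = w" by auto
    show "w - x \<in> insert {} (link L x)"
    proof (cases "w - x = {}")
      case False
      then have "w - x \<in> L" using w closed by blast
      then show ?thesis using w by (auto simp: link_def Un_absorb2)
    qed simp
  next
    fix s assume s: "s \<in> insert {} (link L x)"
    then show "s \<union> x - x = s" by (auto simp: link_def)
    show "s \<union> x \<in> {w. w \<in> insert {} L \<and> x \<subseteq> w}"
      using s assms(2) by (auto simp: link_def)
    have "finite s" "s \<inter> x = {}" using s simplices by (auto simp: link_def)
    then show "(-1) ^ (card (s \<union> x) + card x) = (-1::int) ^ card s"
      using \<open>finite x\<close> by (simp add: card_Un_disjoint power_add flip: mult.assoc)
  qed
  finally show ?thesis .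
qed

theorem mainTheorem9:
  fixes L :: "'a set set" and y z :: "'a set"
  assumes "finite_simplicial_complex L"
    and "y \<in> insert {} L" and "z \<in> insert {} L"
  shows "(\<Sum>x\<in>{x \<in> insert {} L. x \<inter> y = z}. mu L x) = (if y = z then 1 else 0)"
proof -
  have "finite (insert {} L)" "\<forall>w\<in>insert {} L. finite w \<and> Pow w \<subseteq> insert {} L"
    using assms(1) unfolding finite_simplicial_complex_def simplicial_complex_def by blast+
  then show ?thesis
    using sum_alternating_cofaces_meet[OF _ _ assms(2)] mu_eq_sum_cofaces[OF assms(1)] by simp
qed

end
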